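(* Let $[a,b]\subset[0,1]$, $c\in(0,1]$, $K=\{u\in\mathcal C([0,1]): u\ge 0,\ \min_{t\in[a,b]}u(t)\ge c\|u\|\}$ with the supremum norm $\|\cdot\|$. Assume: (H1) $f:[0,1]\times[0,\infty)\to[0,\infty)$ is such that $f(\cdot,u(\cdot))$ is measurable whenever $u\in\mathcal C([0,1])$, and for each $r>0$ there is $R>0$ with $f(t,u)\le R$ for a.a. $t\in[0,1]$ and all $u\in[0,r]$; (H2) $g$ is measurable and $g\ge 0$ a.e.; (H3) $k:[0,1]\times[0,1]\to[0,\infty)$ is continuous; (H4) there is a measurable $\Phi:[0,1]\to[0,\infty)$ with $\Phi g\in L^1(0,1)$, $\int_a^b\Phi g>0$, $k(t,s)\le\Phi(s)$ for all $t,s\in[0,1]$ and $c\Phi(s)\le k(t,s)$ for $t\in[a,b]$, $s\in[0,1]$. Let $T:K\to K$, $Tu(t)=\int_0^1k(t,s)g(s)f(s,u(s))\,ds$, and let $\mathbb T$ be its closed--convex envelope. Suppose that $\{u\}\cap\mathbb{T}u\subset\{Tu\}$ for all $u\in K\cap\mathbb{T}K$, and that there exist $\rho>0$ and $\varepsilon>0$ such that $f^{\rho,\varepsilon}<m$, where $$f^{\rho,\varepsilon}:=\sup_{0\le t\le1,\,0\le u\le\rho+\varepsilon}\frac{f(t,u)}{\rho},\qquad \frac1m:=\sup_{t\in[0,1]}\int_0^1k(t,s)g(s)\,ds.$$ Then $\lambda u\notin\mathbb{T}u$ for all $u\in K$ with $\|u\|=\rho$ and all $\lambda\ge1$.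
   Context: The closed--convex envelope of $T:K\to K$ is the multivalued map $\mathbb{T}u=\bigcap_{\varepsilon>0}\overline{\mathrm{co}}\,T\big(\overline B_\varepsilon(u)\cap K\big)$, where $\overline B_\varepsilon(u)$ is the closed ball in $\mathcal C([0,1])$ and $\overline{\mathrm{co}}$ is closed convex hull; $\mathbb TK=\bigcup_{u\in K}\mathbb Tu$. *)

theory Defs
  imports "HOL-Analysis.Analysis"
begin

text \<open>Convention: C([0,1]) is represented isometrically as the closed linear subspace of
  bounded continuous functions on the reals which are constant outside [0,1]
  (i.e. u t = u (clamp t)).  Sup norm over the reals = sup norm over [0,1].\<close>

definition clamp01 :: "real \<Rightarrow> real" where
  "clamp01 t = max 0 (min 1 t)"

definition C01 :: "(real \<Rightarrow>\<^sub>C real) set" where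
  "C01 = {u. \<forall>t. apply_bcontfun u t = apply_bcontfun u (clamp01 t)}"

definition coneK :: "real \<Rightarrow> real \<Rightarrow> real \<Rightarrow> (real \<Rightarrow>\<^sub>C real) set" where
  "coneK a b c = {u \<in> C01. (\<forall>t\<in>{0..1}. apply_bcontfun u t \<ge> 0)
                      \<and> (INF t\<in>{a..b}. apply_bcontfun u t) \<ge> c * norm u}"

definition hammT :: "(real \<Rightarrow> real \<Rightarrow> real) \<Rightarrow> (real \<Rightarrow> real) \<Rightarrow> (real \<Rightarrow> real \<Rightarrow> real)
                      \<Rightarrow> (real \<Rightarrow>\<^sub>C real) \<Rightarrow> (real \<Rightarrow>\<^sub>C real)" where
  "hammT k g f u = Bcontfun (\<lambda>t. integral\<^sup>L (lebesgue_on {0..1})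
        (\<lambda>s. k (clamp01 t) s * g s * f s (apply_bcontfun u s)))"

definition envelope :: "('a::real_normed_vector \<Rightarrow> 'b::real_normed_vector) \<Rightarrow> 'a set \<Rightarrow> 'a \<Rightarrow> 'b set" where
  "envelope T K u = (\<Inter>\<epsilon>\<in>{0<..}. closure (convex hull (T ` (cball u \<epsilon> \<inter> K))))"

end

theory Submission
  imports Defs
begin

text \<open>On the sphere of radius \<rho> the growth bound on f gives, for every w \<in> K with
  \<parallel>w\<parallel> \<le> \<rho> + \<epsilon>, the estimate \<parallel>Tw\<parallel> \<le> \<rho> \<cdot> f^(\<rho>,\<epsilon>) / m < \<rho>. Hence T maps the \<epsilon>-neighbourhood
  of u in K into a closed ball of radius smaller than \<rho>, and so does its closed convex
  envelope; but \<parallel>\<lambda>u\<parallel> \<ge> \<rho> for \<lambda> \<ge> 1.\<close>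

lemma envelope_subset_closed_convex:
  assumes "\<epsilon> > 0" "T ` (cball u \<epsilon> \<inter> K) \<subseteq> C" "closed C" "convex C"
  shows "envelope T K u \<subseteq> C"
proof -
  have "closure (convex hull (T ` (cball u \<epsilon> \<inter> K))) \<subseteq> C"
    using assms by (intro closure_minimal hull_minimal) auto
  then show ?thesis
    using \<open>\<epsilon> > 0\<close> unfolding envelope_def by auto
qed

lemma clamp01_in_unit_interval: "clamp01 t \<in> {0..1}"
  by (auto simp: clamp01_def)

locale hammerstein_kernel =
  fixes k :: "real \<Rightarrow> real \<Rightarrow> real" and g \<Phi> :: "real \<Rightarrow> real"
  assumes g_measurable: "g \<in> borel_measurable (lebesgue_on {0..1})"
    and g_nonneg: "AE s in lebesgue_on {0..1}. g s \<ge> 0"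
    and k_continuous: "continuous_on ({0..1} \<times> {0..1}) (\<lambda>(t, s). k t s)"
    and k_nonneg: "\<And>t s. t \<in> {0..1} \<Longrightarrow> s \<in> {0..1} \<Longrightarrow> k t s \<ge> 0"
    and k_le_\<Phi>: "\<And>t s. t \<in> {0..1} \<Longrightarrow> s \<in> {0..1} \<Longrightarrow> k t s \<le> \<Phi> s"
    and \<Phi>g_integrable: "integrable (lebesgue_on {0..1}) (\<lambda>s. \<Phi> s * g s)"
begin

abbreviation "L \<equiv> lebesgue_on {0..1::real}"

definition kernel_sup :: real where
  "kernel_sup = (SUP t\<in>{0..1}. integral\<^sup>L L (\<lambda>s. k t s * g s))"

lemma AE_g_nonneg_on: "AE s in L. s \<in> {0..1} \<and> g s \<ge> 0"
  using g_nonneg by (rule AE_mp) (auto intro!: AE_I2)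

lemma kernel_section_measurable:
  assumes "t \<in> {0..1}"
  shows "k t \<in> borel_measurable L"
proof -
  have "continuous_on {0..1} (\<lambda>s. (\<lambda>(t, s). k t s) (t, s))"
    using assms by (intro continuous_on_compose2[OF k_continuous] continuous_intros) auto
  then show ?thesis
    by (intro continuous_imp_measurable_on_sets_lebesgue) auto
qed

lemma integrable_kernel_mult:
  assumes t: "t \<in> {0..1}" and v: "v \<in> borel_measurable L" "\<And>s. s \<in> {0..1} \<Longrightarrow> \<bar>v s\<bar> \<le> B"
  shows "integrable L (\<lambda>s. k t s * g s * v s)"
proof (rule Bochner_Integration.integrable_bound)
  show "integrable L (\<lambda>s. \<Phi> s * g s * B)"
    using \<Phi>g_integrable by simp
  show "(\<lambda>s. k t s * g s * v s) \<in> borel_measurable L"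
    using kernel_section_measurable[OF t] g_measurable v(1) by measurable
  show "AE s in L. norm (k t s * g s * v s) \<le> norm (\<Phi> s * g s * B)"
    using AE_g_nonneg_on
  proof eventually_elim
    case (elim s)
    with t k_nonneg[of t s] k_le_\<Phi>[of t s] v(2)[of s] show ?case
      by (auto simp: abs_mult intro!: mult_mono)
  qed
qed

lemma kernel_integral_nonneg:
  assumes "t \<in> {0..1}" "\<And>s. s \<in> {0..1} \<Longrightarrow> 0 \<le> v s"
  shows "0 \<le> integral\<^sup>L L (\<lambda>s. k t s * g s * v s)"
  using AE_g_nonneg_on by (intro integral_nonneg_AE, eventually_elim) (use assms k_nonneg in auto)

lemma integrable_kernel: "t \<in> {0..1} \<Longrightarrow> integrable L (\<lambda>s. k t s * g s)"
  using integrable_kernel_mult[of t "\<lambda>_. 1" 1] by simp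

lemma kernel_integral_le:
  assumes t: "t \<in> {0..1}" and v: "v \<in> borel_measurable L" "\<And>s. s \<in> {0..1} \<Longrightarrow> 0 \<le> v s \<and> v s \<le> B"
  shows "integral\<^sup>L L (\<lambda>s. k t s * g s * v s) \<le> B * integral\<^sup>L L (\<lambda>s. k t s * g s)"
proof -
  have "AE s in L. k t s * g s * v s \<le> k t s * g s * B"
    using AE_g_nonneg_on by eventually_elim (use v(2) k_nonneg[OF t] in \<open>auto intro!: mult_left_mono\<close>)
  moreover have "\<bar>v s\<bar> \<le> B" if "s \<in> {0..1}" for s
    using v(2)[OF that] by simp
  ultimately have "integral\<^sup>L L (\<lambda>s. k t s * g s * v s) \<le> integral\<^sup>L L (\<lambda>s. k t s * g s * B)"
    using integrable_kernel_mult[OF t v(1)] integrable_kernel[OF t] by (intro integral_mono_AE) auto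
  also have "\<dots> = B * integral\<^sup>L L (\<lambda>s. k t s * g s)"
    by (simp add: mult.commute)
  finally show ?thesis .
qed

lemma kernel_integral_le_sup:
  assumes "t \<in> {0..1}"
  shows "integral\<^sup>L L (\<lambda>s. k t s * g s) \<le> kernel_sup"
proof -
  have "integral\<^sup>L L (\<lambda>s. k t s * g s) \<le> integral\<^sup>L L (\<lambda>s. \<Phi> s * g s)" if "t \<in> {0..1}" for t
    using AE_g_nonneg_on
    by (intro integral_mono_AE integrable_kernel \<Phi>g_integrable that, eventually_elim)
       (use that k_le_\<Phi> in \<open>auto intro!: mult_right_mono\<close>)
  then have "bdd_above ((\<lambda>t. integral\<^sup>L L (\<lambda>s. k t s * g s)) ` {0..1})"
    by (intro bdd_aboveI2) auto
  then show ?thesis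
    unfolding kernel_sup_def using assms by (rule cSUP_upper2) auto
qed

lemma kernel_sup_nonneg: "0 \<le> kernel_sup"
  using kernel_integral_nonneg[of 0 "\<lambda>_. 1"] kernel_integral_le_sup[of 0] by simp

lemma continuous_kernel_integral:
  assumes v: "v \<in> borel_measurable L" "\<And>s. s \<in> {0..1} \<Longrightarrow> \<bar>v s\<bar> \<le> B"
  shows "continuous_on UNIV (\<lambda>t. integral\<^sup>L L (\<lambda>s. k (clamp01 t) s * g s * v s))"
proof (rule continuous_on_sequentiallyI)
  fix x :: "nat \<Rightarrow> real" and t0 assume x: "x \<longlonglongrightarrow> t0"
  have "isCont (\<lambda>t. k (clamp01 t) s) t0" if "s \<in> {0..1}" for s
  proof -
    have "continuous_on UNIV (\<lambda>t. (\<lambda>(t, s). k t s) (clamp01 t, s))"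
      using that clamp01_in_unit_interval unfolding clamp01_def
      by (intro continuous_on_compose2[OF k_continuous] continuous_intros) auto
    then show ?thesis
      by (simp add: continuous_on_eq_continuous_at)
  qed
  then have pointwise: "AE s in L. (\<lambda>n. k (clamp01 (x n)) s * g s * v s)
                           \<longlonglongrightarrow> k (clamp01 t0) s * g s * v s"
    using x by (intro AE_I2 tendsto_intros) (auto intro: isCont_tendsto_compose)
  have dominated: "AE s in L. norm (k (clamp01 t) s * g s * v s) \<le> \<Phi> s * g s * B" for t
    using AE_g_nonneg_on
  proof eventually_elim
    case (elim s)
    with clamp01_in_unit_interval[of t] k_nonneg[of "clamp01 t" s] k_le_\<Phi>[of "clamp01 t" s] v(2)[of s]
    show ?case
      by (auto simp: abs_mult intro!: mult_mono)
  qed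
  have measurable: "(\<lambda>s. k (clamp01 t) s * g s * v s) \<in> borel_measurable L" for t
    using kernel_section_measurable[OF clamp01_in_unit_interval] g_measurable v(1) by measurable
  show "(\<lambda>n. integral\<^sup>L L (\<lambda>s. k (clamp01 (x n)) s * g s * v s))
          \<longlonglongrightarrow> integral\<^sup>L L (\<lambda>s. k (clamp01 t0) s * g s * v s)"
    using \<Phi>g_integrable
    by (intro integral_dominated_convergence[OF measurable measurable _ pointwise dominated]) simp
qed

lemma norm_hammT_le:
  assumes meas: "(\<lambda>s. f s (apply_bcontfun u s)) \<in> borel_measurable L"
    and bound: "\<And>s. s \<in> {0..1} \<Longrightarrow> 0 \<le> f s (apply_bcontfun u s) \<and> f s (apply_bcontfun u s) \<le> B"
  shows "norm (hammT k g f u) \<le> B * kernel_sup"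
proof -
  define h where "h t = integral\<^sup>L L (\<lambda>s. k (clamp01 t) s * g s * f s (apply_bcontfun u s))" for t
  have B: "0 \<le> B"
    using bound[of 0] by simp
  have h_bound: "norm (h t) \<le> B * kernel_sup" for t
  proof -
    have "0 \<le> h t"
      unfolding h_def using bound by (intro kernel_integral_nonneg clamp01_in_unit_interval) auto
    moreover have "h t \<le> B * kernel_sup"
      unfolding h_def
      using kernel_integral_le[OF clamp01_in_unit_interval meas bound]
        kernel_integral_le_sup[OF clamp01_in_unit_interval]
      by (meson B mult_left_mono order_trans)
    ultimately show ?thesis
      by simp
  qed
  have "continuous_on UNIV h"
    unfolding h_def using bound by (intro continuous_kernel_integral[OF meas, of B]) auto
  then have "h \<in> bcontfun"
    using h_bound by (rule bcontfun_normI)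
  then have "apply_bcontfun (hammT k g f u) = h"
    unfolding hammT_def h_def by (simp add: Bcontfun_inverse)
  then show ?thesis
    using h_bound by (intro norm_bound) simp
qed

lemma norm_hammT_le_of_growth_bound:
  assumes f_meas: "\<forall>u. continuous_on {0..1} u \<and> (\<forall>t\<in>{0..1}. u t \<ge> 0) \<longrightarrow>
                     (\<lambda>s. f s (u s)) \<in> borel_measurable L"
    and f_nonneg: "\<forall>t\<in>{0..1}. \<forall>x\<ge>0. f t x \<ge> 0"
    and f_le: "\<And>t x. t \<in> {0..1} \<Longrightarrow> x \<in> {0..R} \<Longrightarrow> f t x \<le> B"
    and w_nonneg: "\<forall>s\<in>{0..1}. 0 \<le> apply_bcontfun w s" and w_le: "norm w \<le> R"
  shows "norm (hammT k g f w) \<le> B * kernel_sup"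
proof (rule norm_hammT_le)
  show "(\<lambda>s. f s (apply_bcontfun w s)) \<in> borel_measurable L"
    using f_meas w_nonneg by auto
  have "apply_bcontfun w s \<le> R" for s
    using norm_bounded[of w s] w_le by simp
  then show "0 \<le> f s (apply_bcontfun w s) \<and> f s (apply_bcontfun w s) \<le> B" if "s \<in> {0..1}" for s
    using that w_nonneg f_nonneg f_le by auto
qed

end

theorem lemma2:
  fixes a b c \<rho> \<epsilon> :: real
    and f :: "real \<Rightarrow> real \<Rightarrow> real" and g \<Phi> :: "real \<Rightarrow> real" and k :: "real \<Rightarrow> real \<Rightarrow> real"
  assumes ab: "0 \<le> a" "a \<le> b" "b \<le> 1"
    and c: "0 < c" "c \<le> 1"
    and H1_nonneg: "\<forall>t\<in>{0..1}. \<forall>x\<ge>0. f t x \<ge> 0"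
    and H1_meas: "\<forall>u. continuous_on {0..1} u \<and> (\<forall>t\<in>{0..1}. u t \<ge> 0) \<longrightarrow>
                    (\<lambda>s. f s (u s)) \<in> borel_measurable (lebesgue_on {0..1})"
    and H1_bound: "\<forall>r>0. \<exists>R>0. AE t in lebesgue_on {0..1}. \<forall>x\<in>{0..r}. f t x \<le> R"
    and H2: "g \<in> borel_measurable (lebesgue_on {0..1})" "AE s in lebesgue_on {0..1}. g s \<ge> 0"
    and H3: "continuous_on ({0..1} \<times> {0..1}) (\<lambda>(t, s). k t s)"
            "\<forall>t\<in>{0..1}. \<forall>s\<in>{0..1}. k t s \<ge> 0"
    and H4: "\<Phi> \<in> borel_measurable (lebesgue_on {0..1})" "\<forall>s\<in>{0..1}. \<Phi> s \<ge> 0"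
            "integrable (lebesgue_on {0..1}) (\<lambda>s. \<Phi> s * g s)"
            "integral\<^sup>L (lebesgue_on {a..b}) (\<lambda>s. \<Phi> s * g s) > 0"
            "\<forall>t\<in>{0..1}. \<forall>s\<in>{0..1}. k t s \<le> \<Phi> s"
            "\<forall>t\<in>{a..b}. \<forall>s\<in>{0..1}. c * \<Phi> s \<le> k t s"
    and TK: "hammT k g f ` coneK a b c \<subseteq> coneK a b c"
    and fixp: "\<forall>u \<in> coneK a b c \<inter> (\<Union>v\<in>coneK a b c. envelope (hammT k g f) (coneK a b c) v).
                 {u} \<inter> envelope (hammT k g f) (coneK a b c) u \<subseteq> {hammT k g f u}"
    and \<rho>: "\<rho> > 0" and \<epsilon>: "\<epsilon> > 0"
    and fbdd: "bdd_above ((\<lambda>(t, x). f t x / \<rho>) ` ({0..1} \<times> {0..\<rho> + \<epsilon>}))"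
    and fsmall: "(SUP (t, x)\<in>{0..1} \<times> {0..\<rho> + \<epsilon>}. f t x / \<rho>)
                   < 1 / (SUP t\<in>{0..1}. integral\<^sup>L (lebesgue_on {0..1}) (\<lambda>s. k t s * g s))"
  shows "\<forall>u\<in>coneK a b c. norm u = \<rho> \<longrightarrow>
           (\<forall>lam\<ge>1. lam *\<^sub>R u \<notin> envelope (hammT k g f) (coneK a b c) u)"
proof (intro ballI impI allI)
  interpret hammerstein_kernel k g \<Phi>
    using H2 H3 H4 by unfold_locales auto
  define F where "F = (SUP (t, x)\<in>{0..1} \<times> {0..\<rho> + \<epsilon>}. f t x / \<rho>)"
  have f_le: "f t x \<le> \<rho> * F" if "t \<in> {0..1}" "x \<in> {0..\<rho> + \<epsilon>}" for t x
    using cSUP_upper2[OF fbdd, of "(t, x)" "f t x / \<rho>"] that \<rho> by (auto simp: F_def field_simps)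
  have "0 \<le> f 0 0"
    using H1_nonneg by simp
  also have "\<dots> \<le> \<rho> * F"
    using \<rho> \<epsilon> by (intro f_le) auto
  finally have "0 \<le> F"
    using \<rho> by (simp add: zero_le_mult_iff)
  moreover have "F < 1 / kernel_sup"
    using fsmall unfolding F_def kernel_sup_def .
  ultimately have FM: "F * kernel_sup < 1"
    using kernel_sup_nonneg by (cases "kernel_sup = 0") (simp_all add: pos_less_divide_eq)
  have image_small: "hammT k g f ` (cball u \<epsilon> \<inter> coneK a b c) \<subseteq> cball 0 (\<rho> * F * kernel_sup)"
    if "norm u = \<rho>" for u
  proof clarify
    fix w assume w: "w \<in> cball u \<epsilon>" "w \<in> coneK a b c"
    have "norm w \<le> \<rho> + \<epsilon>"
      using norm_triangle_sub[of w u] w(1) that by (simp add: dist_norm norm_minus_commute)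
    moreover have "\<forall>s\<in>{0..1}. 0 \<le> apply_bcontfun w s"
      using w(2) by (simp add: coneK_def)
    ultimately show "hammT k g f w \<in> cball 0 (\<rho> * F * kernel_sup)"
      using norm_hammT_le_of_growth_bound[where R="\<rho> + \<epsilon>" and B="\<rho> * F", OF H1_meas H1_nonneg f_le] by simp
  qed
  fix u and lam :: real assume "u \<in> coneK a b c" "norm u = \<rho>" "1 \<le> lam"
  have "envelope (hammT k g f) (coneK a b c) u \<subseteq> cball 0 (\<rho> * F * kernel_sup)"
    using envelope_subset_closed_convex[OF \<epsilon> image_small] \<open>norm u = \<rho>\<close> by auto
  moreover have "\<rho> * F * kernel_sup < norm (lam *\<^sub>R u)"
    using FM \<rho> \<open>norm u = \<rho>\<close> \<open>1 \<le> lam\<close> mult_right_mono[of 1 lam \<rho>] by (simp add: mult.assoc)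
  ultimately show "lam *\<^sub>R u \<notin> envelope (hammT k g f) (coneK a b c) u"
    by auto
qed

end
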